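(* Let $F_A=\sum_{i=0}^n\prod_{j=0}^n x_j^{a_{ij}}$ be an invertible polynomial satisfying the Calabi–Yau condition. Let $q_0,\dots,q_n$ be the dual weights (the weights of the transpose matrix $A^T$) and $d^T=\sum_{j=0}^n q_j$. Let $\Xi=\{(A^T)^{-1}\vec v : \vec v\in\mathbb{Z}^{n+1},\ v_0,\dots,v_n\ge1\}$ and $\mathrm{age}(\vec\xi)=\sum_i\xi_i$. Then the set $\{\vec\xi\in\Xi:\mathrm{age}(\vec\xi)=1\}$ consists of exactly one element, namely $\left(\frac{q_0}{d^T},\dots,\frac{q_n}{d^T}\right)$.
   Context: A polynomial $F_A=\sum_{i=0}^n\prod_{j=0}^n x_j^{a_{ij}}$ (one monomial per row of the nonnegative integer matrix $A$) is called invertible if $A$ is invertible, there exist positive integers $r_0,\dots,r_n$ (weights) such that $d:=\sum_{j=0}^n r_j a_{ij}$ is the same for every $i$, and $F_A$ has exactly one critical point, at the origin. It satisfies the Calabi–Yau condition if $d=\sum_{j=0}^n r_j$. The transpose $A^T$ then also defines an invertible polynomial satisfying the Calabi–Yau condition; its weights $q_0,\dots,q_n$ (positive integers with $\sum_{j} q_j a_{ji}=d^T$ for all $i$, where $d^T=\sum_j q_j$) are called the dual weights. *)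

theory Defs
  imports "HOL-Analysis.Analysis"
begin

text \<open>Exponent matrices are integer matrices indexed by a finite type 'n
  (standing for the index set {0,...,n}); nonnegativity is required separately.\<close>

definition nonneg_mat :: "int ^'n ^'n \<Rightarrow> bool" where
  "nonneg_mat A \<longleftrightarrow> (\<forall>i j. A $ i $ j \<ge> 0)"

definition real_mat :: "int ^'n ^'n \<Rightarrow> real ^'n ^'n" where
  "real_mat A = (\<chi> i j. real_of_int (A $ i $ j))"

definition polyF :: "int ^'n ^'n \<Rightarrow> complex ^'n \<Rightarrow> complex" where
  "polyF A x = (\<Sum>i\<in>UNIV. \<Prod>j\<in>UNIV. (x $ j) ^ nat (A $ i $ j))"

definition critical_point :: "(complex ^'n \<Rightarrow> complex) \<Rightarrow> complex ^'n \<Rightarrow> bool" where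
  "critical_point F x \<longleftrightarrow> (F has_derivative (\<lambda>_. 0)) (at x)"

definition is_weight_system :: "int ^'n ^'n \<Rightarrow> ('n \<Rightarrow> nat) \<Rightarrow> nat \<Rightarrow> bool" where
  "is_weight_system A r d \<longleftrightarrow>
     (\<forall>j. r j > 0) \<and> (\<forall>i. (\<Sum>j\<in>UNIV. int (r j) * A $ i $ j) = int d)"

definition invertible_poly :: "int ^'n ^'n \<Rightarrow> bool" where
  "invertible_poly A \<longleftrightarrow>
     nonneg_mat A \<and> invertible (real_mat A) \<and>
     (\<exists>r d. is_weight_system A r d) \<and>
     {x. critical_point (polyF A) x} = {0}"

definition calabi_yau :: "int ^'n ^'n \<Rightarrow> bool" where
  "calabi_yau A \<longleftrightarrow> (\<exists>r. is_weight_system A r (\<Sum>j\<in>UNIV. r j))"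

definition Xi :: "int ^'n ^'n \<Rightarrow> (real ^'n) set" where
  "Xi A = {matrix_inv (transpose (real_mat A)) *v (\<chi> i. real_of_int (v $ i)) | v :: int ^'n.
            \<forall>i. v $ i \<ge> 1}"

definition age :: "real ^'n \<Rightarrow> real" where
  "age \<xi> = (\<Sum>i\<in>UNIV. \<xi> $ i)"

end

theory Submission
  imports Defs
begin

text \<open>Write \<open>M = (A\<^sup>T)\<^sup>-\<^sup>1\<close>. The weight equations say \<open>A r = d \<one>\<close> and \<open>A\<^sup>T q = d\<^sup>T \<one>\<close>,
  so \<open>\<one>\<^sup>T M = r\<^sup>T / d\<close> and \<open>M \<one> = q / d\<^sup>T\<close>. Hence \<open>age (M v) = (r \<bullet> v) / d\<close>, and the
  Calabi--Yau condition \<open>d = \<Sum>j r\<^sub>j\<close> together with \<open>r > 0\<close> makes \<open>age (M v) = 1\<close> for an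
  integer vector \<open>v \<ge> \<one>\<close> force \<open>v = \<one>\<close>, i.e. \<open>M v = q / d\<^sup>T\<close>.\<close>

lemma
  fixes T :: "'a::semiring_1 ^'n ^'m"
  assumes "invertible T"
  shows matrix_inv_right: "T ** matrix_inv T = mat 1"
    and matrix_inv_left: "matrix_inv T ** T = mat 1"
  using someI_ex[OF assms[unfolded invertible_def]] unfolding matrix_inv_def by auto

lemma matrix_inv_mulv_eqI:
  fixes T :: "'a::comm_semiring_1 ^'n ^'m"
  assumes "invertible T" and "T *v x = y"
  shows "matrix_inv T *v y = x"
  by (metis assms matrix_inv_left matrix_vector_mul_assoc matrix_vector_mul_lid)

lemma vector_mul_matrix_inv_eqI:
  fixes T :: "'a::comm_semiring_1 ^'n ^'m"
  assumes "invertible T" and "x v* T = y"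
  shows "y v* matrix_inv T = x"
  by (metis assms matrix_inv_right vector_matrix_mul_assoc vector_matrix_mul_rid)

lemma real_mat_transpose: "real_mat (transpose A) = transpose (real_mat A)"
  by (simp add: real_mat_def transpose_def)

lemma weight_system_mulv:
  assumes "is_weight_system A r d"
  shows "real_mat A *v (\<chi> j. real (r j)) = real d *\<^sub>R 1"
proof -
  have "(\<Sum>j\<in>UNIV. int (r j) * A $ i $ j) = int d" for i
    using assms unfolding is_weight_system_def by auto
  then have "(\<Sum>j\<in>UNIV. real_of_int (A $ i $ j) * real (r j)) = real d" for i
    by (metis (no_types, lifting) mult.commute of_int_mult of_int_of_nat_eq of_int_sum
        of_nat_sum sum.cong)
  then show ?thesis
    by (simp add: vec_eq_iff real_mat_def matrix_vector_mult_def)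
qed

lemma weight_sum_pos:
  assumes "is_weight_system A r d"
  shows "(\<Sum>j\<in>UNIV. real (r j)) > 0"
  using assms unfolding is_weight_system_def by (simp add: sum_pos)

lemma matrix_inv_mulv_one:
  fixes T :: "real ^'n ^'n"
  assumes "invertible T" and "T *v x = c *\<^sub>R 1" and "c \<noteq> 0"
  shows "matrix_inv T *v 1 = (1 / c) *\<^sub>R x"
proof -
  have "T *v ((1 / c) *\<^sub>R x) = 1"
    using assms(2,3) by (simp add: matrix_vector_mult_scaleR)
  then show ?thesis
    using matrix_inv_mulv_eqI[OF assms(1)] by blast
qed

text \<open>Summing the coordinates of \<open>(B\<^sup>T)\<^sup>-\<^sup>1 w\<close> is pairing with \<open>\<one>\<^sup>T (B\<^sup>T)\<^sup>-\<^sup>1 = (B\<^sup>-\<^sup>1 \<one>)\<^sup>T\<close>.\<close>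

lemma age_matrix_inv_transpose_mulv:
  fixes B :: "real ^'n ^'n"
  assumes "invertible B" and "B *v r = c *\<^sub>R 1" and "c \<noteq> 0"
  shows "age (matrix_inv (transpose B) *v w) = (r \<bullet> w) / c"
proof -
  have "((1 / c) *\<^sub>R r) v* transpose B = 1"
    using assms(2,3) by (simp add: matrix_vector_mult_scaleR)
  then have row: "1 v* matrix_inv (transpose B) = (1 / c) *\<^sub>R r"
    using vector_mul_matrix_inv_eqI[OF transpose_invertible[OF assms(1)]] by blast
  have "age (matrix_inv (transpose B) *v w) = 1 \<bullet> (matrix_inv (transpose B) *v w)"
    by (simp add: age_def inner_vec_def)
  also have "\<dots> = (1 v* matrix_inv (transpose B)) \<bullet> w"
    by (simp add: dot_lmul_matrix)
  finally show ?thesis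
    by (simp add: row)
qed

lemma weighted_sum_eq_sum_iff:
  fixes r v :: "'a \<Rightarrow> real"
  assumes "finite S" and "\<And>j. j \<in> S \<Longrightarrow> r j > 0" and "\<And>j. j \<in> S \<Longrightarrow> v j \<ge> 1"
  shows "(\<Sum>j\<in>S. r j * v j) = (\<Sum>j\<in>S. r j) \<longleftrightarrow> (\<forall>j\<in>S. v j = 1)"
proof -
  have "(\<Sum>j\<in>S. r j * v j) - (\<Sum>j\<in>S. r j) = (\<Sum>j\<in>S. r j * (v j - 1))"
    by (simp add: algebra_simps sum_subtractf)
  moreover have "(\<Sum>j\<in>S. r j * (v j - 1)) = 0 \<longleftrightarrow> (\<forall>j\<in>S. r j * (v j - 1) = 0)"
    using assms by (intro sum_nonneg_eq_0_iff) (simp_all add: less_imp_le)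
  ultimately show ?thesis
    using assms(2) by (fastforce simp: less_le)
qed

theorem mainTheorem2:
  fixes A :: "int ^'n ^'n" and q :: "'n \<Rightarrow> nat"
  assumes "invertible_poly A"
    and "calabi_yau A"
    and "is_weight_system (transpose A) q (\<Sum>j\<in>UNIV. q j)"
  shows "{\<xi> \<in> Xi A. age \<xi> = 1} =
         {\<chi> j. real (q j) / real (\<Sum>k\<in>UNIV. q k)}"
proof -
  obtain r where r: "is_weight_system A r (\<Sum>j\<in>UNIV. r j)"
    using assms(2) unfolding calabi_yau_def by auto
  define M where "M = matrix_inv (transpose (real_mat A))"
  have inv: "invertible (real_mat A)"
    using assms(1) unfolding invertible_poly_def by auto
  have age_M: "age (M *v w) = 1 \<longleftrightarrow> (\<Sum>j\<in>UNIV. real (r j) * w $ j) = (\<Sum>j\<in>UNIV. real (r j))" for w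
    using age_matrix_inv_transpose_mulv[OF inv weight_system_mulv[OF r], of w] weight_sum_pos[OF r]
    by (auto simp: M_def inner_vec_def mult.commute)
  have M_one: "M *v 1 = (\<chi> j. real (q j) / real (\<Sum>k\<in>UNIV. q k))"
    using matrix_inv_mulv_one[OF transpose_invertible[OF inv]
        weight_system_mulv[OF assms(3), unfolded real_mat_transpose]] weight_sum_pos[OF assms(3)]
    by (simp add: M_def vec_eq_iff)
  have age_one: "age (M *v 1) = 1"
    by (simp add: age_M)
  have forced: "v = 1" if "\<forall>i. v $ i \<ge> (1::int)" "age (M *v (\<chi> i. real_of_int (v $ i))) = 1" for v
    using that weighted_sum_eq_sum_iff[of UNIV "\<lambda>j. real (r j)" "\<lambda>j. real_of_int (v $ j)"] r
    by (auto simp: age_M is_weight_system_def vec_eq_iff)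
  have of_int_one: "(\<chi> i. real_of_int ((1::int ^'n) $ i)) = 1"
    by (simp add: vec_eq_iff)
  show ?thesis
  proof (intro set_eqI iffI)
    fix \<xi> assume "\<xi> \<in> {\<xi> \<in> Xi A. age \<xi> = 1}"
    then obtain v where "\<forall>i. v $ i \<ge> 1" and \<xi>: "\<xi> = M *v (\<chi> i. real_of_int (v $ i))"
      and "age \<xi> = 1"
      unfolding Xi_def M_def by auto
    then have "v = 1"
      using forced by blast
    then show "\<xi> \<in> {\<chi> j. real (q j) / real (\<Sum>k\<in>UNIV. q k)}"
      using \<xi> M_one of_int_one by simp
  next
    fix \<xi> assume "\<xi> \<in> {\<chi> j. real (q j) / real (\<Sum>k\<in>UNIV. q k)}"
    with M_one age_one of_int_one show "\<xi> \<in> {\<xi> \<in> Xi A. age \<xi> = 1}"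
      unfolding Xi_def M_def[symmetric] by (auto intro!: exI[of _ 1])
  qed
qed

end
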